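(* Let $X$ be a random variable with CDF $F$ and mean $\mu=\mathbb{E}X$, and let $1\le i\le n$ be integers. Each of the following conditions implies $\mathbb{E}X_{i:n}\geq\mu$: 1. $F$ is ID (i.e. $F^{-1}$ is concave on $(0,1)$) and $\frac{i}{n+1}\geq\frac12$; 2. $F$ is ILOR (i.e. $F^{-1}\circ L$ is concave on $\mathbb{R}$, where $L(x)=\frac{1}{1+e^{-x}}$) and $\psi(i)-\psi(n-i+1)\geq 0$; 3. $F$ is IHR (i.e. $F^{-1}\circ\mathcal{E}$ is concave on $(0,\infty)$, where $\mathcal{E}(x)=1-e^{-x}$) and $\sum_{k=n-i+1}^{n}\frac1k\geq 1$.
   Context: $F^{-1}(p)=\inf\{x:F(x)\ge p\}$ is the quantile function. $X_{i:n}$ is the $i$-th order statistic of an i.i.d. sample of size $n$ from $F$. $\psi$ denotes the digamma function. ID: increasing density (convex CDF); ILOR: increasing log-odds rate (convex log-odds $\log\frac{F}{1-F}$); IHR: increasing hazard rate (convex $-\log(1-F)$); the precise definitions used are those given in the claim in terms of the quantile function. *)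

theory Defs
  imports "HOL-Probability.Probability"
begin

definition quantile :: "(real \<Rightarrow> real) \<Rightarrow> real \<Rightarrow> real" where
  "quantile F p = Inf {x. F x \<ge> p}"

definition logistic :: "real \<Rightarrow> real" where
  "logistic x = 1 / (1 + exp (- x))"

definition expcdf :: "real \<Rightarrow> real" where
  "expcdf x = 1 - exp (- x)"

definition order_stat :: "nat \<Rightarrow> nat \<Rightarrow> (nat \<Rightarrow> real) \<Rightarrow> real" where
  "order_stat i n x = sort (map x [0..<n]) ! (i - 1)"

end

(*
  By the quantile transform, E X = int_0^1 Q and E X_{i:n} = int_0^1 beta_{i,n} Q, where Q is the
  quantile function of X and beta_{i,n} is the density of the i-th order statistic of n independent
  uniform variables (its distribution function is the binomial tail p |-> P(Bin(n, p) >= i)).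

  The weight w = beta_{i,n} - 1 has integral 0.  For i >= 2 the density is log-concave and vanishes
  at 0, so w <= 0 on (0, a), w > 0 on (a, b) and w <= 0 on (b, 1), with b = 1 possible.  Write
  Q = g o T with g concave and T increasing.  The chord of g through T a and T b is an affine
  function c + s T with s >= 0 (for b = 1 take the constant Q a), and Q - (c + s T) has the sign
  of w; hence int w Q >= s int w T >= 0 as soon as int beta_{i,n} T >= int T.
  The three conditions are this moment inequality for T u = u, logit u and -ln (1 - u), whose
  beta_{i,n}-moments are i / (n + 1), psi i - psi (n - i + 1) and H_n - H_{n-i}, against the
  uniform moments 1/2, 0 and 1.  For i = 1 each condition forces n = 1, where beta_{1,1} = 1.
*)

theory Submission
  imports Defs "HOL-Real_Asymp.Real_Asymp"
begin

section \<open>Order statistics and the binomial tail\<close>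

definition binom_tail :: "nat \<Rightarrow> nat \<Rightarrow> real \<Rightarrow> real" where
  "binom_tail i n p = (\<Sum>k=i..n. real (n choose k) * p ^ k * (1 - p) ^ (n - k))"

lemma sorted_nth_le_iff:
  assumes "sorted xs" "1 \<le> i" "i \<le> length xs"
  shows "xs ! (i - 1) \<le> t \<longleftrightarrow> i \<le> length (filter (\<lambda>y. y \<le> t) xs)"
proof
  assume le: "xs ! (i - 1) \<le> t"
  have "{0..<i} \<subseteq> {j. j < length xs \<and> xs ! j \<le> t}"
  proof
    fix j assume "j \<in> {0..<i}"
    then have "j < length xs" "xs ! j \<le> xs ! (i - 1)"
      using assms by (auto intro: sorted_nth_mono)
    then show "j \<in> {j. j < length xs \<and> xs ! j \<le> t}" using le by auto
  qed
  then have "card {0..<i} \<le> card {j. j < length xs \<and> xs ! j \<le> t}"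
    by (intro card_mono) auto
  then show "i \<le> length (filter (\<lambda>y. y \<le> t) xs)"
    by (simp add: length_filter_conv_card)
next
  assume ge: "i \<le> length (filter (\<lambda>y. y \<le> t) xs)"
  show "xs ! (i - 1) \<le> t"
  proof (rule ccontr)
    assume gt: "\<not> xs ! (i - 1) \<le> t"
    have "{j. j < length xs \<and> xs ! j \<le> t} \<subseteq> {0..<i - 1}"
    proof
      fix j assume j: "j \<in> {j. j < length xs \<and> xs ! j \<le> t}"
      have "\<not> i - 1 \<le> j"
      proof
        assume "i - 1 \<le> j"
        then have "xs ! (i - 1) \<le> xs ! j" using j assms by (auto intro: sorted_nth_mono)
        then show False using j gt by auto
      qed
      then show "j \<in> {0..<i - 1}" by simp
    qed
    then have "card {j. j < length xs \<and> xs ! j \<le> t} \<le> i - 1"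
      using card_mono[of "{0..<i - 1}"] by fastforce
    then show False using ge assms by (simp add: length_filter_conv_card)
  qed
qed

lemma order_stat_le_iff:
  assumes "1 \<le> i" "i \<le> n"
  shows "order_stat i n x \<le> t \<longleftrightarrow> i \<le> card {j. j < n \<and> x j \<le> t}"
proof -
  let ?xs = "map x [0..<n]"
  have "order_stat i n x \<le> t \<longleftrightarrow> i \<le> length (filter (\<lambda>y. y \<le> t) (sort ?xs))"
    unfolding order_stat_def using assms by (intro sorted_nth_le_iff) auto
  also have "length (filter (\<lambda>y. y \<le> t) (sort ?xs)) = length (filter (\<lambda>y. y \<le> t) ?xs)"
    by (metis mset_filter mset_sort size_mset)
  also have "\<dots> = card {j. j < n \<and> x j \<le> t}"
    by (auto simp: length_filter_conv_card intro!: arg_cong[where f=card])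
  finally show ?thesis .
qed

lemma sum_subsets_card_ge:
  fixes f :: "nat \<Rightarrow> real"
  assumes "finite A"
  shows "(\<Sum>S\<in>{S. S \<subseteq> A \<and> i \<le> card S}. f (card S)) = (\<Sum>k=i..card A. real (card A choose k) * f k)"
proof -
  have fin: "finite {S. S \<subseteq> A \<and> i \<le> card S}" using assms by auto
  have img: "card ` {S. S \<subseteq> A \<and> i \<le> card S} \<subseteq> {i..card A}"
    using assms by (auto intro: card_mono)
  have "(\<Sum>S\<in>{S. S \<subseteq> A \<and> i \<le> card S}. f (card S)) =
      (\<Sum>k=i..card A. \<Sum>S\<in>{S \<in> {S. S \<subseteq> A \<and> i \<le> card S}. card S = k}. f (card S))"
    by (rule sum.group[OF fin _ img, symmetric]) simp
  also have "\<dots> = (\<Sum>k=i..card A. real (card A choose k) * f k)"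
  proof (rule sum.cong[OF refl])
    fix k assume "k \<in> {i..card A}"
    then have "{S \<in> {S. S \<subseteq> A \<and> i \<le> card S}. card S = k} = {S. S \<subseteq> A \<and> card S = k}"
      by auto
    then show "(\<Sum>S\<in>{S \<in> {S. S \<subseteq> A \<and> i \<le> card S}. card S = k}. f (card S))
        = real (card A choose k) * f k"
      using n_subsets[OF assms, of k] by simp
  qed
  finally show ?thesis .
qed

lemma measure_PiM_pattern:
  fixes M :: "real measure"
  assumes "real_distribution M" "S \<subseteq> {..<n}"
  shows "measure (PiM {..<n} (\<lambda>_. M))
      {x \<in> space (PiM {..<n} (\<lambda>_. M)). \<forall>j\<in>{..<n}. x j \<in> (if j \<in> S then {..t} else {t<..})}
    = cdf M t ^ card S * (1 - cdf M t) ^ (n - card S)"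
proof -
  interpret real_distribution M by fact
  interpret P: product_prob_space "\<lambda>_. M" "{..<n}" by unfold_locales
  let ?p = "cdf M t"
  have compl: "measure M {t<..} = 1 - ?p"
    using prob_compl[of "{..t}"] by (simp add: cdf_def Compl_eq_Diff_UNIV[symmetric] Compl_atMost)
  have "emeasure (PiM {..<n} (\<lambda>_. M))
      {x \<in> space (PiM {..<n} (\<lambda>_. M)). \<forall>j\<in>{..<n}. x j \<in> (if j \<in> S then {..t} else {t<..})}
    = (\<Prod>j<n. emeasure M (if j \<in> S then {..t} else {t<..}))"
    by (rule P.emeasure_PiM_Collect) auto
  also have "\<dots> = (\<Prod>j<n. ennreal (if j \<in> S then ?p else 1 - ?p))"
    using compl by (intro prod.cong) (auto simp: emeasure_eq_measure cdf_def)
  also have "\<dots> = ennreal (\<Prod>j<n. if j \<in> S then ?p else 1 - ?p)"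
    by (rule prod_ennreal) (auto simp: cdf_nonneg cdf_bounded_prob)
  also have "(\<Prod>j<n. if j \<in> S then ?p else 1 - ?p) = ?p ^ card S * (1 - ?p) ^ (n - card S)"
  proof -
    have "{..<n} \<inter> - S = {..<n} - S" by auto
    then show ?thesis
      using assms(2) by (simp add: prod.If_cases Int_absorb1 card_Diff_subset finite_subset)
  qed
  finally show ?thesis
    by (simp add: measure_def cdf_nonneg cdf_bounded_prob)
qed

lemma measure_PiM_count_le:
  fixes M :: "real measure"
  assumes "real_distribution M"
  shows "measure (PiM {..<n} (\<lambda>_. M)) {x \<in> space (PiM {..<n} (\<lambda>_. M)). i \<le> card {j. j < n \<and> x j \<le> t}}
     = binom_tail i n (cdf M t)"
proof -
  interpret real_distribution M by fact
  interpret P: product_prob_space "\<lambda>_. M" "{..<n}" by unfold_locales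
  let ?P = "PiM {..<n} (\<lambda>_. M)"
  let ?p = "cdf M t"
  define E where "E S = {x \<in> space ?P. \<forall>j\<in>{..<n}. x j \<in> (if j \<in> S then {..t} else {t<..})}" for S
  let ?SS = "{S. S \<subseteq> {..<n} \<and> i \<le> card S}"
  have E_iff: "x \<in> E S \<longleftrightarrow> x \<in> space ?P \<and> {j. j < n \<and> x j \<le> t} = S" if "S \<subseteq> {..<n}" for x S
    using that unfolding E_def by (auto simp: not_le) (meson lessThan_iff not_less)
  have count_eq: "{x \<in> space ?P. i \<le> card {j. j < n \<and> x j \<le> t}} = (\<Union>S\<in>?SS. E S)"
    by (auto simp: E_iff)
  have disj: "disjoint_family_on E ?SS"
    unfolding disjoint_family_on_def by (auto simp: E_iff)
  have E_sets: "E S \<in> sets ?P" for S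
  proof -
    have [measurable]: "(if j \<in> S then {..t} else {t<..}) \<in> sets borel" for j by auto
    show ?thesis unfolding E_def by measurable
  qed
  have "measure ?P {x \<in> space ?P. i \<le> card {j. j < n \<and> x j \<le> t}}
      = (\<Sum>S\<in>?SS. measure ?P (E S))"
    unfolding count_eq by (rule measure_finite_Union) (auto simp: E_sets disj)
  also have "\<dots> = (\<Sum>S\<in>?SS. ?p ^ card S * (1 - ?p) ^ (n - card S))"
    using measure_PiM_pattern[OF assms] by (intro sum.cong) (auto simp: E_def)
  also have "\<dots> = binom_tail i n ?p"
    using sum_subsets_card_ge[of "{..<n}" "\<lambda>k. ?p ^ k * (1 - ?p) ^ (n - k)" i]
    by (simp add: binom_tail_def mult.assoc)
  finally show ?thesis .
qed

lemma order_stat_measurable: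
  fixes M :: "real measure"
  assumes "sets M = sets borel" "1 \<le> i" "i \<le> n"
  shows "order_stat i n \<in> borel_measurable (PiM {..<n} (\<lambda>_. M))"
proof (subst borel_measurable_iff_le, intro allI)
  fix t
  have count: "real (card {j. j < n \<and> x j \<le> t}) = (\<Sum>j<n. if x j \<le> t then 1 else 0)" for x :: "nat \<Rightarrow> real"
    by (simp add: sum.If_cases Int_def)
  have [measurable]: "(\<lambda>x. \<Sum>j<n. if x j \<le> t then 1 else 0 :: real) \<in> borel_measurable (PiM {..<n} (\<lambda>_. M))"
    using assms(1) by measurable
  have "{x \<in> space (PiM {..<n} (\<lambda>_. M)). order_stat i n x \<le> t}
      = {x \<in> space (PiM {..<n} (\<lambda>_. M)). real i \<le> (\<Sum>j<n. if x j \<le> t then 1 else 0)}"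
    using assms by (simp add: order_stat_le_iff count[symmetric])
  also have "\<dots> \<in> sets (PiM {..<n} (\<lambda>_. M))" by measurable
  finally show "{x \<in> space (PiM {..<n} (\<lambda>_. M)). order_stat i n x \<le> t} \<in> sets (PiM {..<n} (\<lambda>_. M))" .
qed

lemma cdf_order_stat:
  fixes M :: "real measure"
  assumes M: "real_distribution M" and i: "1 \<le> i" "i \<le> n"
  shows "cdf (distr (PiM {..<n} (\<lambda>_. M)) borel (order_stat i n)) t = binom_tail i n (cdf M t)"
proof -
  interpret real_distribution M by fact
  have [measurable]: "order_stat i n \<in> borel_measurable (PiM {..<n} (\<lambda>_. M))"
    using order_stat_measurable i by simp
  have "cdf (distr (PiM {..<n} (\<lambda>_. M)) borel (order_stat i n)) t
     = measure (PiM {..<n} (\<lambda>_. M)) {x \<in> space (PiM {..<n} (\<lambda>_. M)). order_stat i n x \<le> t}"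
    unfolding cdf_def by (subst measure_distr) (auto intro!: arg_cong2[where f=measure])
  also have "\<dots> = binom_tail i n (cdf M t)"
    using i by (simp add: order_stat_le_iff measure_PiM_count_le[OF M])
  finally show ?thesis .
qed

section \<open>The beta density\<close>

definition beta_density :: "nat \<Rightarrow> nat \<Rightarrow> real \<Rightarrow> real" where
  "beta_density i n u = real n * real ((n - 1) choose (i - 1)) * u ^ (i - 1) * (1 - u) ^ (n - i)"

abbreviation lborel01 :: "real measure" where
  "lborel01 \<equiv> restrict_space lborel {0<..<1}"

abbreviation beta_measure :: "nat \<Rightarrow> nat \<Rightarrow> real measure" where
  "beta_measure i n \<equiv> density lborel01 (\<lambda>u. ennreal (beta_density i n u))"

lemma beta_density_eq:
  assumes "1 \<le> k"
  shows "beta_density k n u = real k * real (n choose k) * u ^ (k - 1) * (1 - u) ^ (n - k)"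
  using binomial_absorption[of "k - 1" n] assms by (simp add: beta_density_def flip: of_nat_mult)

lemma beta_density_Suc:
  "beta_density (Suc k) n u = real (n - k) * real (n choose k) * u ^ k * (1 - u) ^ (n - k - 1)"
  using binomial_absorb_comp[of n k] by (simp add: beta_density_def flip: of_nat_mult)

lemma binom_term_deriv:
  assumes "1 \<le> k"
  shows "((\<lambda>p. real (n choose k) * p ^ k * (1 - p) ^ (n - k)) has_real_derivative
           beta_density k n p - beta_density (Suc k) n p) (at p)"
  using assms by (auto intro!: derivative_eq_intros simp: beta_density_eq beta_density_Suc algebra_simps)

lemma binom_tail_deriv:
  assumes "1 \<le> i" "i \<le> n"
  shows "(binom_tail i n has_real_derivative beta_density i n p) (at p)"
proof -
  have "(binom_tail i n has_real_derivative (\<Sum>k=i..n. beta_density k n p - beta_density (Suc k) n p)) (at p)"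
    unfolding binom_tail_def[abs_def] using assms by (intro DERIV_sum binom_term_deriv) simp
  moreover have "(\<Sum>k=i..n. beta_density k n p - beta_density (Suc k) n p) = beta_density i n p"
    using sum_Suc_diff[of i n "\<lambda>k. - beta_density k n p"] assms by (simp add: beta_density_def)
  ultimately show ?thesis by simp
qed

lemma binom_tail_0: "1 \<le> i \<Longrightarrow> binom_tail i n 0 = 0"
  unfolding binom_tail_def by (auto intro!: sum.neutral)

lemma binom_tail_1:
  assumes "i \<le> n"
  shows "binom_tail i n 1 = 1"
proof -
  have "binom_tail i n 1 = (\<Sum>k=i..n. if k = n then 1 else 0)"
    unfolding binom_tail_def by (intro sum.cong) auto
  then show ?thesis using assms by simp
qed

lemma binom_tail_nonneg: "0 \<le> p \<Longrightarrow> p \<le> 1 \<Longrightarrow> 0 \<le> binom_tail i n p"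
  unfolding binom_tail_def by (auto intro!: sum_nonneg)

lemma beta_density_nonneg: "0 \<le> u \<Longrightarrow> u \<le> 1 \<Longrightarrow> 0 \<le> beta_density i n u"
  unfolding beta_density_def by auto

lemma beta_density_1_1: "beta_density 1 1 u = 1"
  by (simp add: beta_density_def)

lemma isCont_beta_density: "isCont (beta_density i n) u"
  unfolding beta_density_def by (intro continuous_intros)

lemma isCont_binom_tail: "isCont (binom_tail i n) p"
  unfolding binom_tail_def by (intro continuous_intros)

lemma beta_density_measurable [measurable]: "beta_density i n \<in> borel_measurable borel"
  unfolding beta_density_def by measurable

section \<open>The quantile transform\<close>

lemma quantile_cdf_eq_Inf:
  "quantile (cdf M) = (\<lambda>\<omega>. Inf {x. \<omega> \<le> cdf M x})"
  by (simp add: fun_eq_iff quantile_def)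

lemma quantile_cdf_measurable:
  assumes "real_distribution M"
  shows "quantile (cdf M) \<in> borel_measurable lborel01"
proof -
  interpret cdf_distribution M using assms by (simp add: cdf_distribution_def)
  show ?thesis
    unfolding quantile_cdf_eq_Inf using measurable_CI
    by (simp add: measurable_cong_sets[OF sets_restrict_space_cong[OF sets_lborel] refl])
qed

lemma mono_on_quantile_cdf:
  assumes "real_distribution M"
  shows "mono_on {0<..<1} (quantile (cdf M))"
proof -
  interpret cdf_distribution M using assms by (simp add: cdf_distribution_def)
  show ?thesis unfolding quantile_cdf_eq_Inf by (rule mono_I)
qed

lemma quantile_cdf_le_iff:
  assumes "real_distribution M" "0 < \<omega>" "\<omega> < 1"
  shows "quantile (cdf M) \<omega> \<le> x \<longleftrightarrow> \<omega> \<le> cdf M x"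
proof -
  interpret cdf_distribution M using assms(1) by (simp add: cdf_distribution_def)
  show ?thesis unfolding quantile_cdf_eq_Inf by (rule pseudoinverse[OF assms(2,3), symmetric])
qed

lemma distr_quantile_cdf:
  assumes "real_distribution M"
  shows "distr lborel01 borel (quantile (cdf M)) = M"
proof -
  interpret cdf_distribution M using assms by (simp add: cdf_distribution_def)
  show ?thesis unfolding quantile_cdf_eq_Inf by (rule distr_I_eq_M)
qed

lemma emeasure_beta_density_atMost:
  assumes "1 \<le> i" "i \<le> n" "0 \<le> c" "c \<le> 1"
  shows "emeasure (beta_measure i n) ({0<..<1} \<inter> {..c}) = binom_tail i n c"
proof -
  have "{0<..<1} \<inter> {..c} \<in> sets lborel01" by (simp add: sets_restrict_space_iff)
  then have "emeasure (beta_measure i n) ({0<..<1} \<inter> {..c})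
      = (\<integral>\<^sup>+u. ennreal (beta_density i n u) * indicator ({0<..<1} \<inter> {..c}) u \<partial>lborel01)"
    by (simp add: emeasure_density measurable_restrict_space1)
  also have "\<dots> = (\<integral>\<^sup>+u. ennreal (beta_density i n u) * indicator ({0<..<1} \<inter> {..c}) u \<partial>lborel)"
    by (subst nn_integral_restrict_space) (auto intro!: nn_integral_cong simp: indicator_def)
  also have "\<dots> = (\<integral>\<^sup>+u. ennreal (beta_density i n u) * indicator {0..c} u \<partial>lborel)"
    using AE_lborel_singleton[of 0] AE_lborel_singleton[of 1]
    by (intro nn_integral_cong_AE, eventually_elim) (use assms in \<open>auto simp: indicator_def\<close>)
  also have "\<dots> = binom_tail i n c - binom_tail i n 0"
    using assms by (intro nn_integral_FTC_Icc binom_tail_deriv beta_density_nonneg) auto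
  finally show ?thesis using assms by (simp add: binom_tail_0)
qed

lemma prob_space_beta_density:
  assumes "1 \<le> i" "i \<le> n"
  shows "prob_space (beta_measure i n)"
proof (rule prob_spaceI)
  have "{0<..<1} \<inter> {..1} = {0<..<1::real}" by auto
  then show "emeasure (beta_measure i n) (space (beta_measure i n)) = 1"
    using emeasure_beta_density_atMost[OF assms, of 1] assms
    by (simp add: space_restrict_space binom_tail_1)
qed

lemma cdf_quantile_beta_density:
  assumes M: "real_distribution M" and i: "1 \<le> i" "i \<le> n"
  shows "cdf (distr (beta_measure i n) borel (quantile (cdf M))) t
      = binom_tail i n (cdf M t)"
proof -
  have [measurable]: "quantile (cdf M) \<in> borel_measurable (beta_measure i n)"
    unfolding measurable_density_eq1 by (rule quantile_cdf_measurable[OF M])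
  note cdf_bounds = finite_borel_measure.cdf_nonneg[OF real_distribution.finite_borel_measure_M[OF M]]
    real_distribution.cdf_bounded_prob[OF M]
  have "cdf (distr (beta_measure i n) borel (quantile (cdf M))) t
      = measure (beta_measure i n) {u \<in> space (beta_measure i n). quantile (cdf M) u \<le> t}"
    unfolding cdf_def[of "distr _ _ _"]
    by (subst measure_distr) (auto intro!: arg_cong2[where f=measure])
  also have "{u \<in> space (beta_measure i n). quantile (cdf M) u \<le> t} = {0<..<1} \<inter> {..cdf M t}"
    using quantile_cdf_le_iff[OF M] by (auto simp: space_restrict_space)
  also have "measure (beta_measure i n) \<dots> = binom_tail i n (cdf M t)"
    using emeasure_beta_density_atMost[OF i cdf_bounds] binom_tail_nonneg[OF cdf_bounds]
    by (simp add: measure_def)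
  finally show ?thesis .
qed

lemma distr_order_stat:
  assumes M: "real_distribution M" and i: "1 \<le> i" "i \<le> n"
  shows "distr (PiM {..<n} (\<lambda>_. M)) borel (order_stat i n)
      = distr (beta_measure i n) borel (quantile (cdf M))"
proof (rule cdf_unique)
  interpret real_distribution M by fact
  interpret P: product_prob_space "\<lambda>_. M" "{..<n}" by unfold_locales
  interpret V: prob_space "beta_measure i n" using prob_space_beta_density[OF i] .
  show "real_distribution (distr (PiM {..<n} (\<lambda>_. M)) borel (order_stat i n))"
    using i by (intro P.real_distribution_distr order_stat_measurable) simp_all
  show "real_distribution (distr (beta_measure i n) borel (quantile (cdf M)))"
    using quantile_cdf_measurable[OF M] by (intro V.real_distribution_distr) simp
  show "cdf (distr (PiM {..<n} (\<lambda>_. M)) borel (order_stat i n))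
      = cdf (distr (beta_measure i n) borel (quantile (cdf M)))"
    using cdf_order_stat[OF M i] cdf_quantile_beta_density[OF M i] by (simp add: fun_eq_iff)
qed

lemma integral_order_stat:
  assumes M: "real_distribution M" and i: "1 \<le> i" "i \<le> n"
  shows "(\<integral>x. order_stat i n x \<partial>PiM {..<n} (\<lambda>_. M))
      = (\<integral>u. beta_density i n u * quantile (cdf M) u \<partial>lborel01)"
proof -
  have [measurable]: "order_stat i n \<in> borel_measurable (PiM {..<n} (\<lambda>_. M))"
    using real_distribution.events_eq_borel[OF M] i by (intro order_stat_measurable)
  have Q_meas [measurable]: "quantile (cdf M) \<in> borel_measurable lborel01"
    by (rule quantile_cdf_measurable[OF M])
  have "(\<integral>x. order_stat i n x \<partial>PiM {..<n} (\<lambda>_. M))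
      = (\<integral>x. x \<partial>distr (PiM {..<n} (\<lambda>_. M)) borel (order_stat i n))"
    by (simp add: integral_distr)
  also have "\<dots> = (\<integral>x. x \<partial>distr (beta_measure i n) borel (quantile (cdf M)))"
    by (simp add: distr_order_stat[OF M i])
  also have "\<dots> = (\<integral>u. quantile (cdf M) u \<partial>beta_measure i n)"
    using Q_meas by (simp add: integral_distr)
  also have "\<dots> = (\<integral>u. beta_density i n u * quantile (cdf M) u \<partial>lborel01)"
    by (subst integral_density)
      (auto intro!: measurable_restrict_space1 AE_I2 beta_density_nonneg simp: space_restrict_space)
  finally show ?thesis .
qed

lemma integral_quantile_cdf:
  assumes M: "real_distribution M"
  shows "(\<integral>x. x \<partial>M) = (\<integral>u. quantile (cdf M) u \<partial>lborel01)"
  using quantile_cdf_measurable[OF M]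
  by (subst distr_quantile_cdf[OF M, symmetric]) (simp add: integral_distr)

lemma integrable_quantile_cdf:
  assumes M: "real_distribution M" and "integrable M (\<lambda>x. x)"
  shows "integrable lborel01 (quantile (cdf M))"
proof -
  have "integrable (distr lborel01 borel (quantile (cdf M))) (\<lambda>x. x)"
    using assms by (simp add: distr_quantile_cdf)
  then show ?thesis
    using quantile_cdf_measurable[OF M] by (simp add: integrable_distr_eq)
qed

section \<open>Moments of the beta density\<close>

lemma one_minus_binom_tail:
  assumes "i \<le> n"
  shows "1 - binom_tail i n u = (1 - u) * (\<Sum>k<i. real (n choose k) * u ^ k * (1 - u) ^ (n - k - 1))"
proof -
  have "{..n} = {..<i} \<union> {i..n}" using assms by auto
  then have "(\<Sum>k\<le>n. real (n choose k) * u ^ k * (1 - u) ^ (n - k))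
      = (\<Sum>k<i. real (n choose k) * u ^ k * (1 - u) ^ (n - k)) + binom_tail i n u"
    unfolding binom_tail_def by (subst sum.union_disjoint[symmetric]) auto
  moreover have "(\<Sum>k\<le>n. real (n choose k) * u ^ k * (1 - u) ^ (n - k)) = 1"
    using binomial_ring[of u "1 - u" n] by (simp add: mult_ac)
  moreover have "(\<Sum>k<i. real (n choose k) * u ^ k * (1 - u) ^ (n - k))
      = (1 - u) * (\<Sum>k<i. real (n choose k) * u ^ k * (1 - u) ^ (n - k - 1))"
    unfolding sum_distrib_left using assms
    by (intro sum.cong) (simp_all add: Suc_diff_Suc flip: power_Suc)
  ultimately show ?thesis by linarith
qed

lemma sum_inverse_diff_eq_harm:
  assumes "i \<le> n"
  shows "(\<Sum>k<i. 1 / real (n - k)) = harm n - harm (n - i)"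
  using assms
proof (induction i)
  case (Suc i)
  then have "n - i = Suc (n - Suc i)" by simp
  then have "harm (n - i) = harm (n - Suc i) + 1 / real (n - i)"
    by (simp add: harm_Suc inverse_eq_divide)
  with Suc show ?case by simp
qed simp

lemma tendsto_at_right_of_isCont: "isCont f x \<Longrightarrow> (f \<longlongrightarrow> f x) (at_right x)"
  by (rule tendsto_within_subset[of _ _ _ UNIV]) (simp_all add: isCont_def)

lemma tendsto_at_left_of_isCont: "isCont f x \<Longrightarrow> (f \<longlongrightarrow> f x) (at_left x)"
  by (rule tendsto_within_subset[of _ _ _ UNIV]) (simp_all add: isCont_def)

lemma lborel01_integral_FTC_nonneg:
  fixes f F :: "real \<Rightarrow> real"
  assumes F: "\<And>x. 0 < x \<Longrightarrow> x < 1 \<Longrightarrow> (F has_real_derivative f x) (at x)"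
    and f: "\<And>x. 0 < x \<Longrightarrow> x < 1 \<Longrightarrow> isCont f x"
    and f_nonneg: "\<And>x. 0 < x \<Longrightarrow> x < 1 \<Longrightarrow> 0 \<le> f x"
    and A: "(F \<longlongrightarrow> A) (at_right 0)"
    and B: "(F \<longlongrightarrow> B) (at_left 1)"
  shows "integrable lborel01 f" "integral\<^sup>L lborel01 f = B - A"
proof -
  have einterval: "einterval 0 1 = {0<..<1::real}"
    by (auto simp: einterval_def zero_ereal_def one_ereal_def)
  have nonneg: "AE x in lborel. 0 < ereal x \<longrightarrow> ereal x < 1 \<longrightarrow> 0 \<le> f x"
    using f_nonneg by (auto simp: zero_ereal_def one_ereal_def)
  have A': "((F \<circ> real_of_ereal) \<longlongrightarrow> A) (at_right 0)"
    using A by (simp add: zero_ereal_def ereal_tendsto_simps1)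
  have B': "((F \<circ> real_of_ereal) \<longlongrightarrow> B) (at_left 1)"
    using B by (simp add: one_ereal_def ereal_tendsto_simps1)
  note FTC = interval_integral_FTC_nonneg[of 0 1 F f, OF _ _ _ nonneg A' B']
  have "set_integrable lborel {0<..<1} f" "(LBINT x=0..1. f x) = B - A"
    using FTC F f by (auto simp: einterval zero_ereal_def one_ereal_def)
  then show "integrable lborel01 f" "integral\<^sup>L lborel01 f = B - A"
    by (simp_all add: set_integrable_def integrable_restrict_space integral_restrict_space
        interval_lebesgue_integral_def set_lebesgue_integral_def einterval)
qed

lemma prob_space_lborel01: "prob_space lborel01"
  by (rule prob_spaceI) (simp add: emeasure_restrict_space space_restrict_space)

lemma integral_beta_density:
  assumes "1 \<le> i" "i \<le> n"
  shows "integrable lborel01 (beta_density i n)" "integral\<^sup>L lborel01 (beta_density i n) = 1"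
proof -
  have "(binom_tail i n \<longlongrightarrow> 0) (at_right 0)" "(binom_tail i n \<longlongrightarrow> 1) (at_left 1)"
    using tendsto_at_right_of_isCont[OF isCont_binom_tail, of i n 0]
      tendsto_at_left_of_isCont[OF isCont_binom_tail, of i n 1] assms
    by (simp_all add: binom_tail_0 binom_tail_1)
  from lborel01_integral_FTC_nonneg[OF binom_tail_deriv[OF assms] isCont_beta_density _ this]
  show "integrable lborel01 (beta_density i n)" "integral\<^sup>L lborel01 (beta_density i n) = 1"
    by (simp_all add: beta_density_nonneg)
qed

lemma integrable_beta_density_mult:
  assumes "integrable lborel01 f"
  shows "integrable lborel01 (\<lambda>u. beta_density i n u * f u)"
proof (rule Bochner_Integration.integrable_bound)
  let ?c = "real n * real ((n - 1) choose (i - 1))"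
  show "integrable lborel01 (\<lambda>u. ?c * f u)" using assms by simp
  show "(\<lambda>u. beta_density i n u * f u) \<in> borel_measurable lborel01"
    using borel_measurable_integrable[OF assms]
    by (intro borel_measurable_times) (auto intro!: measurable_restrict_space1)
  have "\<bar>beta_density i n u\<bar> \<le> ?c" if "0 < u" "u < 1" for u
  proof -
    have "u ^ (i - 1) * (1 - u) ^ (n - i) \<le> 1"
      using that by (intro mult_le_one power_le_one) auto
    then show ?thesis
      using that mult_left_mono[of _ 1 ?c] by (simp add: beta_density_def abs_mult mult.assoc)
  qed
  then show "AE u in lborel01. norm (beta_density i n u * f u) \<le> norm (?c * f u)"
    by (intro AE_I2) (auto simp: space_restrict_space abs_mult intro!: mult_right_mono)
qed

lemma lborel01_reflect:
  fixes f :: "real \<Rightarrow> real"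
  shows "integrable lborel01 (\<lambda>u. f (1 - u)) \<longleftrightarrow> integrable lborel01 f"
    and "integral\<^sup>L lborel01 (\<lambda>u. f (1 - u)) = integral\<^sup>L lborel01 f"
proof -
  let ?g = "\<lambda>u. indicator {0<..<1} u *\<^sub>R f u"
  have reflect: "indicator {0<..<1} (1 - u) = (indicator {0<..<1} u :: real)" for u :: real
    by (auto simp: indicator_def)
  show "integrable lborel01 (\<lambda>u. f (1 - u)) \<longleftrightarrow> integrable lborel01 f"
    using lborel_integrable_real_affine_iff[of "- 1" ?g 1]
    by (simp add: integrable_restrict_space reflect)
  show "integral\<^sup>L lborel01 (\<lambda>u. f (1 - u)) = integral\<^sup>L lborel01 f"
    using lborel_integral_real_affine[of "- 1" ?g 1]
    by (simp add: integral_restrict_space reflect)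
qed

lemma beta_density_reflect:
  assumes "1 \<le> i" "i \<le> n"
  shows "beta_density i n (1 - u) = beta_density (n + 1 - i) n u"
  using assms binomial_symmetric[of "i - 1" "n - 1"]
  by (simp add: beta_density_def Suc_diff_le mult_ac)

lemma integral_beta_density_mult_id:
  assumes "1 \<le> i" "i \<le> n"
  shows "integrable lborel01 (\<lambda>u. beta_density i n u * u)"
    "integral\<^sup>L lborel01 (\<lambda>u. beta_density i n u * u) = real i / (real n + 1)"
proof -
  have "beta_density i n u * u = real i / (real n + 1) * beta_density (Suc i) (Suc n) u" for u
  proof -
    have "u ^ i = u ^ (i - 1) * u" using assms by (simp flip: power_Suc2)
    moreover have "beta_density (Suc i) (Suc n) u = (real n + 1) * real (n choose i) * u ^ i * (1 - u) ^ (n - i)"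
      by (simp add: beta_density_def)
    ultimately show ?thesis
      using assms by (simp add: beta_density_eq field_simps)
  qed
  then show "integrable lborel01 (\<lambda>u. beta_density i n u * u)"
    "integral\<^sup>L lborel01 (\<lambda>u. beta_density i n u * u) = real i / (real n + 1)"
    using integral_beta_density[of "Suc i" "Suc n"] assms by simp_all
qed

lemma sum_binom_tail_Suc_deriv:
  assumes "i \<le> n"
  shows "((\<lambda>u. \<Sum>k<i. binom_tail (Suc k) n u / real (n - k)) has_real_derivative
      (\<Sum>k<i. real (n choose k) * u ^ k * (1 - u) ^ (n - k - 1))) (at u)"
proof -
  have "((\<lambda>u. \<Sum>k<i. binom_tail (Suc k) n u / real (n - k)) has_real_derivative
      (\<Sum>k<i. beta_density (Suc k) n u / real (n - k))) (at u)"
    using assms by (intro DERIV_sum DERIV_cdivide binom_tail_deriv) auto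
  moreover have "beta_density (Suc k) n u / real (n - k) = real (n choose k) * u ^ k * (1 - u) ^ (n - k - 1)"
    if "k < i" for k
    using that assms by (simp add: beta_density_Suc)
  ultimately show ?thesis by simp
qed

lemma tendsto_ln_mult_one_minus_binom_tail:
  assumes "i \<le> n"
  shows "((\<lambda>u. ln (1 - u) * (1 - binom_tail i n u)) \<longlongrightarrow> 0) (at_left 1)"
proof -
  define R where "R u = (\<Sum>k<i. real (n choose k) * u ^ k * (1 - u) ^ (n - k - 1))" for u
  have "isCont R 1" unfolding R_def by (intro continuous_intros)
  moreover have "((\<lambda>u::real. (1 - u) * ln (1 - u)) \<longlongrightarrow> 0) (at_left 1)"
    by real_asymp
  ultimately have "((\<lambda>u. (1 - u) * ln (1 - u) * R u) \<longlongrightarrow> 0 * R 1) (at_left 1)"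
    by (intro tendsto_mult tendsto_at_left_of_isCont)
  then show ?thesis
    using one_minus_binom_tail[OF assms] by (simp add: R_def mult_ac)
qed

lemma integral_beta_density_mult_neg_ln_one_minus:
  assumes i: "1 \<le> i" "i \<le> n"
  shows "integrable lborel01 (\<lambda>u. beta_density i n u * - ln (1 - u))"
    "integral\<^sup>L lborel01 (\<lambda>u. beta_density i n u * - ln (1 - u)) = harm n - harm (n - i)"
proof -
  \<comment> \<open>S' u = (1 - binom_tail i n u) / (1 - u) cancels the derivative of the factor ln (1 - u).\<close>
  define S where "S u = (\<Sum>k<i. binom_tail (Suc k) n u / real (n - k))" for u
  define F where "F u = ln (1 - u) * (1 - binom_tail i n u) + S u" for u
  have deriv: "(F has_real_derivative beta_density i n u * - ln (1 - u)) (at u)" if "0 < u" "u < 1" for u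
  proof -
    have "((\<lambda>u. ln (1 - u)) has_real_derivative - 1 / (1 - u)) (at u)"
      using that by (auto intro!: derivative_eq_intros)
    from DERIV_add[OF DERIV_mult'[OF this DERIV_diff[OF DERIV_const binom_tail_deriv[OF i]]]
        sum_binom_tail_Suc_deriv[OF i(2)]]
    have "(F has_real_derivative ln (1 - u) * (0 - beta_density i n u) + - 1 / (1 - u) * (1 - binom_tail i n u)
        + (\<Sum>k<i. real (n choose k) * u ^ k * (1 - u) ^ (n - k - 1))) (at u)"
      unfolding F_def[abs_def] S_def[abs_def] .
    then show ?thesis
      using that by (simp add: one_minus_binom_tail[OF i(2)] mult.commute)
  qed
  have cont: "isCont (\<lambda>u. beta_density i n u * - ln (1 - u)) u" if "0 < u" "u < 1" for u
    using that by (intro continuous_intros isCont_beta_density) auto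
  have nonneg: "0 \<le> beta_density i n u * - ln (1 - u)" if "0 < u" "u < 1" for u
    using that by (intro mult_nonneg_nonneg beta_density_nonneg) auto
  have "isCont F 0"
    unfolding F_def S_def using i by (intro continuous_intros isCont_binom_tail) auto
  moreover have "F 0 = 0"
    using i by (simp add: F_def S_def binom_tail_0)
  ultimately have lim0: "(F \<longlongrightarrow> 0) (at_right 0)"
    using tendsto_at_right_of_isCont[where f=F] by metis
  have "isCont S 1"
    unfolding S_def using i by (intro continuous_intros isCont_binom_tail) auto
  moreover have "S 1 = harm n - harm (n - i)"
    unfolding S_def sum_inverse_diff_eq_harm[OF i(2), symmetric]
    using i by (intro sum.cong) (simp_all add: binom_tail_1)
  ultimately have lim1: "(F \<longlongrightarrow> harm n - harm (n - i)) (at_left 1)"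
    unfolding F_def[abs_def]
    using tendsto_add[OF tendsto_ln_mult_one_minus_binom_tail[OF i(2)] tendsto_at_left_of_isCont, of S]
    by simp
  from lborel01_integral_FTC_nonneg[OF deriv cont nonneg lim0 lim1]
  show "integrable lborel01 (\<lambda>u. beta_density i n u * - ln (1 - u))"
    "integral\<^sup>L lborel01 (\<lambda>u. beta_density i n u * - ln (1 - u)) = harm n - harm (n - i)"
    by simp_all
qed

definition logit :: "real \<Rightarrow> real" where
  "logit u = ln u - ln (1 - u)"

lemma integral_beta_density_mult_logit:
  assumes i: "1 \<le> i" "i \<le> n"
  shows "integrable lborel01 (\<lambda>u. beta_density i n u * logit u)"
    "integral\<^sup>L lborel01 (\<lambda>u. beta_density i n u * logit u) = harm (i - 1) - harm (n - i)"
proof -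
  have i': "1 \<le> n + 1 - i" "n + 1 - i \<le> n" using i by auto
  have reflect: "beta_density (n + 1 - i) n (1 - u) * - ln (1 - (1 - u)) = beta_density i n u * - ln u" for u
    using beta_density_reflect[OF i', of u] i by simp
  note right = integral_beta_density_mult_neg_ln_one_minus[OF i]
  \<comment> \<open>u \<mapsto> 1 - u turns the -ln (1 - u) moment of beta_{n+1-i,n} into the -ln u moment of beta_{i,n}.\<close>
  note left = integral_beta_density_mult_neg_ln_one_minus[OF i',
      folded lborel01_reflect[where f="\<lambda>u. beta_density (n + 1 - i) n u * - ln (1 - u)"], unfolded reflect]
  have logit: "beta_density i n u * logit u = beta_density i n u * - ln (1 - u) - beta_density i n u * - ln u" for u
    by (simp add: logit_def algebra_simps)
  show "integrable lborel01 (\<lambda>u. beta_density i n u * logit u)"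
    unfolding logit using left right by simp
  show "integral\<^sup>L lborel01 (\<lambda>u. beta_density i n u * logit u) = harm (i - 1) - harm (n - i)"
    unfolding logit using left right i by simp
qed

section \<open>The crossing argument\<close>

lemma concave_onD_three_points:
  fixes g :: "real \<Rightarrow> real"
  assumes "concave_on D g" "x \<in> D" "z \<in> D" "x < y" "y < z"
  shows "g x * (z - y) + g z * (y - x) \<le> g y * (z - x)"
proof -
  define t where "t = (y - x) / (z - x)"
  have t: "0 \<le> t" "t \<le> 1" "t * (z - x) = y - x"
    using assms by (auto simp: t_def field_simps)
  have "(1 - t) *\<^sub>R x + t *\<^sub>R z = y"
    using t(3) by (simp add: algebra_simps)
  then have "(1 - t) * g x + t * g z \<le> g y"
    using concave_onD[OF assms(1) t(1,2) assms(2,3)] by simp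
  then have "((1 - t) * g x + t * g z) * (z - x) \<le> g y * (z - x)"
    using assms by (intro mult_right_mono) auto
  moreover have "((1 - t) * g x + t * g z) * (z - x) = g x * ((z - x) - t * (z - x)) + g z * (t * (z - x))"
    by (simp add: algebra_simps)
  ultimately show ?thesis
    using t(3) by simp
qed

lemma concave_on_chord:
  fixes g :: "real \<Rightarrow> real"
  assumes g: "concave_on D g" and AB: "A \<in> D" "B \<in> D" "A < B" and t: "t \<in> D"
  defines "l \<equiv> g A + (g B - g A) / (B - A) * (t - A)"
  shows "A \<le> t \<Longrightarrow> t \<le> B \<Longrightarrow> l \<le> g t"
    and "t \<le> A \<or> B \<le> t \<Longrightarrow> g t \<le> l"
proof -
  have l: "l * (B - A) = g A * (B - t) + g B * (t - A)"
    using AB by (simp add: l_def field_simps)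
  show "l \<le> g t" if "A \<le> t" "t \<le> B"
  proof (cases "t = A \<or> t = B")
    case False
    then have "l * (B - A) \<le> g t * (B - A)"
      using concave_onD_three_points[OF g AB(1,2), of t] that l by auto
    then show ?thesis using AB by simp
  qed (auto simp: l_def)
  show "g t \<le> l" if "t \<le> A \<or> B \<le> t"
  proof (cases "t = A \<or> t = B")
    case False
    with that have "t < A \<or> B < t" by auto
    then have "g t * (B - A) \<le> l * (B - A)"
    proof
      assume "t < A"
      then show ?thesis
        using concave_onD_three_points[OF g t AB(2), of A] AB l by (simp add: algebra_simps)
    next
      assume "B < t"
      then show ?thesis
        using concave_onD_three_points[OF g AB(1) t, of B] AB l by (simp add: algebra_simps)
    qed
    then show ?thesis using AB by simp
  qed (auto simp: l_def)
qed

lemma integral_mult_nonneg_if_above_line: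
  fixes w Q T :: "'a \<Rightarrow> real"
  assumes w: "integrable M w" "integral\<^sup>L M w = 0"
    and T: "integrable M (\<lambda>u. w u * T u)" "0 \<le> integral\<^sup>L M (\<lambda>u. w u * T u)"
    and Q: "integrable M (\<lambda>u. w u * Q u)"
    and s: "0 \<le> s"
    and above: "\<And>u. u \<in> space M \<Longrightarrow> 0 \<le> w u * (Q u - (c + s * T u))"
  shows "0 \<le> integral\<^sup>L M (\<lambda>u. w u * Q u)"
proof -
  have split: "w u * Q u = w u * (Q u - (c + s * T u)) + (c * w u + s * (w u * T u))" for u
    by (simp add: algebra_simps)
  have line: "integrable M (\<lambda>u. c * w u + s * (w u * T u))"
    using w T by simp
  have "(\<lambda>u. w u * (Q u - (c + s * T u))) = (\<lambda>u. w u * Q u - (c * w u + s * (w u * T u)))"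
    by (simp add: fun_eq_iff algebra_simps)
  then have "integrable M (\<lambda>u. w u * (Q u - (c + s * T u)))"
    using Q line by simp
  with line have "integral\<^sup>L M (\<lambda>u. w u * Q u)
      = integral\<^sup>L M (\<lambda>u. w u * (Q u - (c + s * T u))) + s * integral\<^sup>L M (\<lambda>u. w u * T u)"
    unfolding split using w T by simp
  moreover have "0 \<le> integral\<^sup>L M (\<lambda>u. w u * (Q u - (c + s * T u)))"
    using above by (intro integral_nonneg_AE AE_I2)
  ultimately show ?thesis
    using s T by simp
qed

lemma integral_mult_nonneg_single_crossing:
  fixes M :: "real measure" and w Q :: "real \<Rightarrow> real"
  assumes w: "integrable M w" "integral\<^sup>L M w = 0" "integrable M (\<lambda>u. w u * Q u)"
    and a: "a \<in> space M" and Q: "mono_on (space M) Q"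
    and below: "\<And>u. u \<in> space M \<Longrightarrow> u < a \<Longrightarrow> w u \<le> 0"
    and above: "\<And>u. u \<in> space M \<Longrightarrow> a < u \<Longrightarrow> 0 \<le> w u"
  shows "0 \<le> integral\<^sup>L M (\<lambda>u. w u * Q u)"
proof (rule integral_mult_nonneg_if_above_line[where T="\<lambda>_. 0" and s=0 and c="Q a"])
  show "0 \<le> w u * (Q u - (Q a + 0 * 0))" if u: "u \<in> space M" for u
  proof (cases u a rule: linorder_cases)
    case less
    then show ?thesis using mono_onD[OF Q u a] below[OF u] by (simp add: mult_nonpos_nonpos)
  next
    case greater
    then show ?thesis using mono_onD[OF Q a u] above[OF u] by simp
  qed simp
qed (use w in simp_all)

lemma integral_mult_nonneg_double_crossing:
  fixes M :: "real measure" and w Q T g :: "real \<Rightarrow> real"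
  assumes w: "integrable M w" "integral\<^sup>L M w = 0" "integrable M (\<lambda>u. w u * Q u)"
    and wT: "integrable M (\<lambda>u. w u * T u)" "0 \<le> integral\<^sup>L M (\<lambda>u. w u * T u)"
    and ab: "a \<in> space M" "b \<in> space M" "a < b" "Q a \<le> Q b"
    and outside: "\<And>u. u \<in> space M \<Longrightarrow> u < a \<or> b < u \<Longrightarrow> w u \<le> 0"
    and inside: "\<And>u. u \<in> space M \<Longrightarrow> a < u \<Longrightarrow> u < b \<Longrightarrow> 0 \<le> w u"
    and T: "strict_mono_on (space M) T"
    and g: "concave_on D g" "T ` space M \<subseteq> D" "\<And>u. u \<in> space M \<Longrightarrow> Q u = g (T u)"
  shows "0 \<le> integral\<^sup>L M (\<lambda>u. w u * Q u)"
proof -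
  define A B where "A = T a" and "B = T b"
  have AB: "A \<in> D" "B \<in> D" "A < B"
    using ab g(2) strict_mono_onD[OF T] by (auto simp: A_def B_def)
  define s where "s = (g B - g A) / (B - A)"
  have "0 \<le> s"
    using ab AB g(3) by (simp add: s_def A_def B_def)
  moreover have "0 \<le> w u * (Q u - (g A - s * A + s * T u))" if u: "u \<in> space M" for u
  proof -
    have chord: "g A - s * A + s * T u = g A + (g B - g A) / (B - A) * (T u - A)"
      by (simp add: s_def right_diff_distrib)
    have Tu: "T u \<in> D" using u g(2) by auto
    consider "u < a \<or> b < u" | "u = a \<or> u = b" | "a < u" "u < b" by linarith
    then show ?thesis
    proof cases
      case 1
      then have "T u \<le> A \<or> B \<le> T u"
        using strict_mono_onD[OF T] u ab by (auto simp: A_def B_def intro: less_imp_le)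
      then show ?thesis
        using concave_on_chord(2)[OF g(1) AB Tu] outside[OF u 1] g(3)[OF u] chord
        by (simp add: mult_nonpos_nonpos)
    next
      case 2
      have "s * (B - A) = g B - g A"
        using AB by (simp add: s_def)
      then have "g A - s * A + s * B = g B"
        by (simp add: algebra_simps)
      then have "Q u = g A - s * A + s * T u"
        using 2 g(3)[OF u] by (auto simp: A_def B_def)
      then show ?thesis by simp
    next
      case 3
      then have "A \<le> T u" "T u \<le> B"
        using strict_mono_onD[OF T] u ab by (auto simp: A_def B_def intro: less_imp_le)
      then show ?thesis
        using concave_on_chord(1)[OF g(1) AB Tu] inside[OF u 3] g(3)[OF u] chord by simp
    qed
  qed
  ultimately show ?thesis
    using integral_mult_nonneg_if_above_line[OF w(1,2) wT w(3)] by blast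
qed

lemma beta_density_gt_one_between:
  assumes i: "1 \<le> i" "i \<le> n" and uvx: "0 < u" "u < v" "v < x" "x < 1"
    and gt: "1 < beta_density i n u" "1 < beta_density i n x"
  shows "1 < beta_density i n v"
proof -
  define c where "c = real n * real ((n - 1) choose (i - 1))"
  have c: "0 < c" unfolding c_def using i by auto
  define h where "h y = ln c + real (i - 1) * ln y + real (n - i) * ln (1 - y)" for y
  have gt_iff: "1 < beta_density i n y \<longleftrightarrow> 0 < h y" if "0 < y" "y < 1" for y
  proof -
    have "beta_density i n y = c * y ^ (i - 1) * (1 - y) ^ (n - i)"
      by (simp add: beta_density_def c_def)
    then have "ln (beta_density i n y) = h y" and "0 < beta_density i n y"
      using that c by (simp_all add: h_def ln_mult ln_realpow)
    then show ?thesis by (metis ln_gt_zero_iff)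
  qed
  have "convex_on {0<..<1} (\<lambda>y. - h y)"
  proof (rule convex_on_realI[where f'="\<lambda>y. real (n - i) / (1 - y) - real (i - 1) / y"])
    show "((\<lambda>y. - h y) has_real_derivative real (n - i) / (1 - y) - real (i - 1) / y) (at y)"
      if "y \<in> {0<..<1}" for y
      using that unfolding h_def by (auto intro!: derivative_eq_intros simp: field_simps)
    show "real (n - i) / (1 - y) - real (i - 1) / y \<le> real (n - i) / (1 - y') - real (i - 1) / y'"
      if "y \<in> {0<..<1}" "y' \<in> {0<..<1}" "y \<le> y'" for y y'
      using that by (intro diff_mono divide_left_mono) auto
  qed simp
  then have "concave_on {0<..<1} h" by (simp add: concave_on_def)
  then have "h u * (x - v) + h x * (v - u) \<le> h v * (x - u)"
    using concave_onD_three_points[of _ h u x v] uvx by simp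
  moreover have "0 < h u * (x - v) + h x * (v - u)"
    using gt_iff gt uvx by (intro add_pos_pos mult_pos_pos) auto
  ultimately have "0 < h v * (x - u)" by linarith
  then show ?thesis using gt_iff uvx by (simp add: zero_less_mult_iff)
qed

lemma beta_density_gt_one_twice:
  assumes i: "2 \<le> i" "i \<le> n"
  obtains x y where "0 < x" "x < y" "y < 1" "1 < beta_density i n x" "1 < beta_density i n y"
proof -
  \<comment> \<open>binom_tail i n u - u vanishes at 0 and 1 and has slope -1 at 0; the mean value theorem
    on [h, 1] gives a point where the density exceeds 1, and then a neighbourhood of it.\<close>
  let ?f = "\<lambda>u. binom_tail i n u - u"
  have deriv: "(?f has_real_derivative beta_density i n u - 1) (at u)" for u
    using i by (auto intro!: derivative_eq_intros binom_tail_deriv)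
  have "beta_density i n 0 - 1 < 0" using i by (simp add: beta_density_def power_0_left)
  then obtain d where "0 < d" and d: "\<And>h. 0 < h \<Longrightarrow> h < d \<Longrightarrow> ?f (0 + h) < ?f 0"
    using DERIV_neg_dec_right[OF deriv] by blast
  define h where "h = min (d / 2) (1 / 2)"
  have h: "0 < h" "h < 1" "?f h < 0"
    using d[of h] \<open>0 < d\<close> i by (auto simp: h_def binom_tail_0)
  obtain v where v: "h < v" "v < 1" "?f 1 - ?f h = (1 - h) * (beta_density i n v - 1)"
    using MVT2[OF h(2) deriv] by blast
  have "0 < (1 - h) * (beta_density i n v - 1)"
    using v(3) h i by (simp add: binom_tail_1)
  then have v_in: "v \<in> {0<..<1} \<inter> {u. 1 < beta_density i n u}"
    using h v by (simp add: zero_less_mult_iff)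
  have "open {u. 1 < beta_density i n u}"
    by (rule open_Collect_less) (simp_all add: continuous_at_imp_continuous_on isCont_beta_density)
  then have "open ({0<..<1} \<inter> {u. 1 < beta_density i n u})"
    by (simp add: open_Int)
  with v_in obtain e where "0 < e" "ball v e \<subseteq> {0<..<1} \<inter> {u. 1 < beta_density i n u}"
    by (meson openE)
  moreover have "v + e / 2 \<in> ball v e"
    using \<open>0 < e\<close> by (simp add: dist_real_def)
  ultimately have "v + e / 2 \<in> {0<..<1} \<inter> {u. 1 < beta_density i n u}"
    by blast
  with v_in \<open>0 < e\<close> show ?thesis
    by (intro that[of v "v + e / 2"]) auto
qed

lemma beta_density_lt_one_near_0:
  assumes "2 \<le> i"
  obtains d where "0 < d" "\<And>u. \<bar>u\<bar> < d \<Longrightarrow> beta_density i n u < 1"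
proof -
  have "open {u. beta_density i n u < 1}"
    by (rule open_Collect_less) (simp_all add: continuous_at_imp_continuous_on isCont_beta_density)
  moreover have "0 \<in> {u. beta_density i n u < 1}"
    using assms by (simp add: beta_density_def power_0_left)
  ultimately obtain d where d: "0 < d" "ball 0 d \<subseteq> {u. beta_density i n u < 1}"
    by (meson openE)
  have "beta_density i n u < 1" if "\<bar>u\<bar> < d" for u
    using d(2) that by (auto simp: dist_real_def subset_iff)
  then show ?thesis using d(1) that by blast
qed

lemma beta_density_crossing:
  assumes i: "2 \<le> i" "i \<le> n"
  obtains a b where "0 < a" "a < b" "b \<le> 1"
    "\<And>u. 0 < u \<Longrightarrow> u < 1 \<Longrightarrow> u < a \<or> b < u \<Longrightarrow> beta_density i n u \<le> 1"
    "\<And>u. a < u \<Longrightarrow> u < b \<Longrightarrow> 1 < beta_density i n u"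
proof -
  define S where "S = {u. 0 < u \<and> u < 1 \<and> 1 < beta_density i n u}"
  obtain x y where "0 < x" "x < y" "y < 1" "1 < beta_density i n x" "1 < beta_density i n y"
    using beta_density_gt_one_twice[OF i] by blast
  then have xy: "x \<in> S" "y \<in> S" "x < y"
    by (auto simp: S_def)
  have bdd: "bdd_below S" "bdd_above S"
    by (auto simp: S_def intro!: bdd_belowI[of _ 0] bdd_aboveI[of _ 1])
  obtain d where "0 < d" and d: "\<And>u. \<bar>u\<bar> < d \<Longrightarrow> beta_density i n u < 1"
    using beta_density_lt_one_near_0[OF i(1)] by blast
  have "d \<le> u" if "u \<in> S" for u
  proof (rule ccontr)
    assume "\<not> d \<le> u"
    with that d[of u] show False by (simp add: S_def)
  qed
  then have "d \<le> Inf S"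
    using xy by (intro cInf_greatest) auto
  show thesis
  proof
    show "0 < Inf S" using \<open>0 < d\<close> \<open>d \<le> Inf S\<close> by linarith
    show "Inf S < Sup S"
      using xy bdd cInf_lower[of x S] cSup_upper[of y S] by linarith
    show "Sup S \<le> 1"
      using xy by (intro cSup_least) (auto simp: S_def)
    show "beta_density i n u \<le> 1" if "0 < u" "u < 1" "u < Inf S \<or> Sup S < u" for u
      using that bdd cInf_lower[of u S] cSup_upper[of u S] by (force simp: S_def)
    show "1 < beta_density i n u" if u: "Inf S < u" "u < Sup S" for u
    proof -
      have "S \<noteq> {}" using xy by auto
      then obtain v w where "v \<in> S" "v < u" "w \<in> S" "u < w"
        using u cInf_less_iff[OF _ bdd(1)] less_cSup_iff[OF _ bdd(2)] by meson
      then show ?thesis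
        using beta_density_gt_one_between[of i n v u w] i by (auto simp: S_def)
    qed
  qed
qed

lemma integral_le_integral_beta_density_mult:
  assumes i: "2 \<le> i" "i \<le> n"
    and Q: "integrable lborel01 Q" "mono_on {0<..<1} Q"
    and T: "integrable lborel01 T" "integrable lborel01 (\<lambda>u. beta_density i n u * T u)"
      "integral\<^sup>L lborel01 T \<le> integral\<^sup>L lborel01 (\<lambda>u. beta_density i n u * T u)"
      "strict_mono_on {0<..<1} T"
    and g: "concave_on D g" "T ` {0<..<1} \<subseteq> D" "\<And>u. 0 < u \<Longrightarrow> u < 1 \<Longrightarrow> Q u = g (T u)"
  shows "integral\<^sup>L lborel01 Q \<le> integral\<^sup>L lborel01 (\<lambda>u. beta_density i n u * Q u)"
proof -
  interpret prob_space lborel01 by (rule prob_space_lborel01)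
  have space: "space lborel01 = {0<..<1}" by (simp add: space_restrict_space)
  define w where "w = (\<lambda>u. beta_density i n u - 1)"
  have mult_w: "w u * f u = beta_density i n u * f u - f u" for f u
    by (simp add: w_def left_diff_distrib)
  have w: "integrable lborel01 w" "integral\<^sup>L lborel01 w = 0"
    using integral_beta_density[of i n] i prob_space by (simp_all add: w_def space)
  have wQ: "integrable lborel01 (\<lambda>u. w u * Q u)"
    "integral\<^sup>L lborel01 (\<lambda>u. w u * Q u)
      = integral\<^sup>L lborel01 (\<lambda>u. beta_density i n u * Q u) - integral\<^sup>L lborel01 Q"
    using integrable_beta_density_mult[OF Q(1)] Q(1) by (simp_all add: mult_w)
  have wT: "integrable lborel01 (\<lambda>u. w u * T u)" "0 \<le> integral\<^sup>L lborel01 (\<lambda>u. w u * T u)"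
    using T(1-3) by (simp_all add: mult_w)
  obtain a b where ab: "0 < a" "a < b" "b \<le> 1"
    and outside: "\<And>u. 0 < u \<Longrightarrow> u < 1 \<Longrightarrow> u < a \<or> b < u \<Longrightarrow> w u \<le> 0"
    and inside: "\<And>u. a < u \<Longrightarrow> u < b \<Longrightarrow> 0 \<le> w u"
    using beta_density_crossing[OF i] unfolding w_def by (metis diff_ge_0_iff_ge diff_le_0_iff_le less_imp_le)
  have "0 \<le> integral\<^sup>L lborel01 (\<lambda>u. w u * Q u)"
  proof (cases "b = 1")
    case True
    show ?thesis
      using w wQ(1) ab Q(2) outside inside True
      by (intro integral_mult_nonneg_single_crossing[where a=a]) (auto simp: space)
  next
    case False
    show ?thesis
    proof (rule integral_mult_nonneg_double_crossing[OF w wQ(1) wT])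
      show "a \<in> space lborel01" "b \<in> space lborel01" "a < b" "Q a \<le> Q b"
        using ab False Q(2) by (auto simp: space intro: mono_onD)
    qed (use outside inside T(4) g in \<open>auto simp: space\<close>)
  qed
  then show ?thesis using wQ(2) by simp
qed

section \<open>The three shape conditions\<close>

lemma Digamma_real_of_nat: "1 \<le> k \<Longrightarrow> Digamma (real k) = harm (k - 1) - euler_mascheroni"
  using Digamma_of_nat[of "k - 1", where 'a=real] by simp

lemma sum_inverse_eq_harm_diff:
  assumes "m \<le> n"
  shows "(\<Sum>k = Suc m..n. 1 / real k) = harm n - harm m"
proof -
  have "{1..n} = {1..m} \<union> {Suc m..n}" using assms by auto
  then have "harm n = harm m + (\<Sum>k = Suc m..n. 1 / real k)"
    unfolding harm_def by (simp add: sum.union_disjoint inverse_eq_divide)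
  then show ?thesis by simp
qed

lemma logistic_logit: "0 < u \<Longrightarrow> u < 1 \<Longrightarrow> logistic (logit u) = u"
  by (simp add: logistic_def logit_def exp_diff field_simps)

lemma expcdf_neg_ln_one_minus: "u < 1 \<Longrightarrow> expcdf (- ln (1 - u)) = u"
  by (simp add: expcdf_def)

lemma integral_le_integral_beta_density_mult_if_concave:
  assumes i: "2 \<le> i" "i \<le> n" and Q: "integrable lborel01 Q" "mono_on {0<..<1} Q"
    and "concave_on {0<..<1} Q" "1 / 2 \<le> real i / (real n + 1)"
  shows "integral\<^sup>L lborel01 Q \<le> integral\<^sup>L lborel01 (\<lambda>u. beta_density i n u * Q u)"
proof (rule integral_le_integral_beta_density_mult[OF i Q, where T="\<lambda>u. u" and g=Q and D="{0<..<1}"])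
  have unif: "integrable lborel01 (\<lambda>u. u)" "integral\<^sup>L lborel01 (\<lambda>u. u) = 1 / 2"
    using integral_beta_density_mult_id[of 1 1, unfolded beta_density_1_1] by simp_all
  note beta = integral_beta_density_mult_id[of i n]
  show "integrable lborel01 (\<lambda>u. u)" "integrable lborel01 (\<lambda>u. beta_density i n u * u)"
    using unif beta i by simp_all
  have "integral\<^sup>L lborel01 (\<lambda>u. beta_density i n u * u) = real i / (real n + 1)"
    using beta i by simp
  then show "integral\<^sup>L lborel01 (\<lambda>u. u) \<le> integral\<^sup>L lborel01 (\<lambda>u. beta_density i n u * u)"
    unfolding unif(2) using assms(6) by simp
qed (use assms in \<open>auto simp: strict_mono_on_def\<close>)

lemma integral_le_integral_beta_density_mult_if_concave_logistic:
  assumes i: "2 \<le> i" "i \<le> n" and Q: "integrable lborel01 Q" "mono_on {0<..<1} Q"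
    and "concave_on UNIV (Q \<circ> logistic)" "0 \<le> Digamma (real i) - Digamma (real (n - i + 1))"
  shows "integral\<^sup>L lborel01 Q \<le> integral\<^sup>L lborel01 (\<lambda>u. beta_density i n u * Q u)"
proof (rule integral_le_integral_beta_density_mult[OF i Q, where T=logit and g="Q \<circ> logistic" and D=UNIV])
  note unif = integral_beta_density_mult_logit[of 1 1, unfolded beta_density_1_1]
  note beta = integral_beta_density_mult_logit[of i n]
  show "integrable lborel01 logit" "integrable lborel01 (\<lambda>u. beta_density i n u * logit u)"
    using unif beta i by simp_all
  have "harm (n - i) \<le> (harm (i - 1) :: real)"
    using assms(6) i Digamma_real_of_nat[of i] Digamma_real_of_nat[of "n - i + 1"] by simp
  then show "integral\<^sup>L lborel01 logit \<le> integral\<^sup>L lborel01 (\<lambda>u. beta_density i n u * logit u)"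
    using unif beta i by simp
  show "strict_mono_on {0<..<1} logit"
  proof (rule strict_mono_onI)
    fix r s :: real assume "r \<in> {0<..<1}" "s \<in> {0<..<1}" "r < s"
    then have "ln r < ln s" "ln (1 - s) < ln (1 - r)" by simp_all
    then show "logit r < logit s" by (simp add: logit_def)
  qed
  show "Q u = (Q \<circ> logistic) (logit u)" if "0 < u" "u < 1" for u
    using that by (simp add: logistic_logit)
qed (use assms in auto)

lemma integral_le_integral_beta_density_mult_if_concave_expcdf:
  assumes i: "2 \<le> i" "i \<le> n" and Q: "integrable lborel01 Q" "mono_on {0<..<1} Q"
    and "concave_on {0<..} (Q \<circ> expcdf)" "1 \<le> (\<Sum>k = n - i + 1..n. 1 / real k)"
  shows "integral\<^sup>L lborel01 Q \<le> integral\<^sup>L lborel01 (\<lambda>u. beta_density i n u * Q u)"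
proof (rule integral_le_integral_beta_density_mult[OF i Q,
      where T="\<lambda>u. - ln (1 - u)" and g="Q \<circ> expcdf" and D="{0<..}"])
  have unif: "integrable lborel01 (\<lambda>u. - ln (1 - u))" "integral\<^sup>L lborel01 (\<lambda>u. - ln (1 - u)) = 1"
    using integral_beta_density_mult_neg_ln_one_minus[of 1 1, unfolded beta_density_1_1]
    by (simp_all add: harm_def)
  note beta = integral_beta_density_mult_neg_ln_one_minus[of i n]
  show "integrable lborel01 (\<lambda>u. - ln (1 - u))"
    "integrable lborel01 (\<lambda>u. beta_density i n u * - ln (1 - u))"
    using unif beta i by simp_all
  have "1 \<le> harm n - (harm (n - i) :: real)"
    using assms(6) i sum_inverse_eq_harm_diff[of "n - i" n] by simp
  then show "integral\<^sup>L lborel01 (\<lambda>u. - ln (1 - u))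
      \<le> integral\<^sup>L lborel01 (\<lambda>u. beta_density i n u * - ln (1 - u))"
    using unif beta i by simp
  show "strict_mono_on {0<..<1} (\<lambda>u::real. - ln (1 - u))"
  proof (rule strict_mono_onI)
    fix r s :: real assume "r \<in> {0<..<1}" "s \<in> {0<..<1}" "r < s"
    then show "- ln (1 - r) < - ln (1 - s)" by simp
  qed
  show "Q u = (Q \<circ> expcdf) (- ln (1 - u))" if "0 < u" "u < 1" for u
    using that by (simp add: expcdf_neg_ln_one_minus)
qed (use assms in auto)

theorem corollary10:
  fixes M :: "real measure" and i n :: nat
  assumes "real_distribution M"
    and "integrable M (\<lambda>x. x)"
    and "1 \<le> i" and "i \<le> n"
    and "(concave_on {0<..<1} (quantile (cdf M)) \<and> real i / (real n + 1) \<ge> 1 / 2)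
       \<or> (concave_on UNIV (quantile (cdf M) \<circ> logistic)
            \<and> Digamma (real i) - Digamma (real (n - i + 1)) \<ge> 0)
       \<or> (concave_on {0<..} (quantile (cdf M) \<circ> expcdf)
            \<and> (\<Sum>k = n - i + 1..n. 1 / real k) \<ge> 1)"
  shows "(\<integral>x. order_stat i n x \<partial>(PiM {..<n} (\<lambda>_. M))) \<ge> (\<integral>x. x \<partial>M)"
proof -
  note Q = integrable_quantile_cdf[OF assms(1,2)] mono_on_quantile_cdf[OF assms(1)]
  have "integral\<^sup>L lborel01 (quantile (cdf M))
      \<le> integral\<^sup>L lborel01 (\<lambda>u. beta_density i n u * quantile (cdf M) u)"
  proof (cases "i = 1")
    case True
    have "n = 1"
      using assms(5)
    proof (elim disjE conjE)
      assume "0 \<le> Digamma (real i) - Digamma (real (n - i + 1))"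
      then have "harm (n - 1) \<le> (0 :: real)"
        using True assms(4) by (simp add: Digamma_real_of_nat)
      then show "n = 1" using True assms(4) by (simp add: not_less[symmetric])
    qed (use True assms(4) in \<open>simp_all add: field_simps\<close>)
    with True show ?thesis by (simp add: beta_density_def)
  next
    case False
    then have "2 \<le> i" using assms(3) by simp
    with assms(4,5) Q show ?thesis
      using integral_le_integral_beta_density_mult_if_concave integral_le_integral_beta_density_mult_if_concave_logistic
        integral_le_integral_beta_density_mult_if_concave_expcdf by blast
  qed
  then show ?thesis
    using integral_order_stat[OF assms(1,3,4)] integral_quantile_cdf[OF assms(1)] by simp
qed

end
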